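(* Let $\phi\in C^3((0,\infty))$, $\eta=\phi'$ and $\hat\eta(r)=\eta(r)+2\eta(2r)$, and suppose there are constants $0<a_0<\tilde r_1<\tilde r_2<2a_0$ and $a_1>a_0$ such that: $\eta'(r)>0$ for $0<r<\tilde r_1$ and $\eta'(r)<0$ for $r>\tilde r_1$; $\eta''(r)<0$ for $0<r<\tilde r_2$ and $\eta''(r)>0$ for $r>\tilde r_2$; $\hat\eta(r)<0$ for $0<r<a_0$ and $\hat\eta(r)>0$ for $r>a_0$; $\hat\eta'(r)>0$ for $0<r<a_1$ and $\hat\eta'(r)<0$ for $r>a_1$. Let $N,K$ be positive integers with $K<N-1$, and let $\hat{\mathbf\Psi}^F:(0,\infty)^{2N+1}\to\mathbb R^{2N+1}$, $\mathbf r=(r_{-N},\dots,r_N)\mapsto(\hat\psi^F_{-N}(\mathbf r),\dots,\hat\psi^F_N(\mathbf r))$, be defined by $\hat\psi^F_j(\mathbf r)=\eta(r_j)+2\eta(2r_j)$ for $-N\le j\le -K$ and for $K\le j\le N$, and $\hat\psi^F_j(\mathbf r)=\eta(r_j)+\eta(r_j+r_{j-1})+\eta(r_j+r_{j+1})+[2\eta(2r_K)-\eta(r_K+r_{K-1})-\eta(r_K+r_{K+1})]$ for $-K+1\le j\le K-1$. Let $\mathbf a_0=(a_0,\dots,a_0)\in\mathbb R^{2N+1}$. If $\eta'(a_0)+8\eta'(2a_0)>0$, then $\hat{\mathbf\Psi}^F$ is bijective in a neighborhood of $\mathbf a_0$, i.e. there is an open neighborhood $U$ of $\mathbf a_0$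 such that $\hat{\mathbf\Psi}^F$ maps $U$ bijectively onto an open neighborhood of $\hat{\mathbf\Psi}^F(\mathbf a_0)$.
   Context: This map $\hat{\mathbf\Psi}^F$ is the (symmetrized) internal conjugate force of the force-based quasicontinuum approximation of a one-dimensional atomic chain with nearest and next-nearest neighbour pair interactions given by the potential $\phi$; indices $-K+1,\dots,K-1$ form the atomistic region and the others the continuum region. *)

theory Defs
  imports "HOL-Analysis.Analysis"
begin

text \<open>Vectors (r_{-N},...,r_N) in R^{2N+1} are represented as functions int => real
  vanishing outside {-N..N}; this set carries the subspace topology of the product
  topology on int => real, which is the Euclidean topology of R^{2N+1}.\<close>

definition chain_space :: "int \<Rightarrow> (int \<Rightarrow> real) set" where
  "chain_space N = {r. \<forall>j. j \<notin> {-N..N} \<longrightarrow> r j = 0}"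

definition pos_chain :: "int \<Rightarrow> (int \<Rightarrow> real) set" where
  "pos_chain N = {r \<in> chain_space N. \<forall>j\<in>{-N..N}. r j > 0}"

definition PsiF :: "(real \<Rightarrow> real) \<Rightarrow> int \<Rightarrow> int \<Rightarrow> (int \<Rightarrow> real) \<Rightarrow> (int \<Rightarrow> real)" where
  "PsiF eta N K r = (\<lambda>j.
     if j \<in> {-N..-K} \<union> {K..N} then eta (r j) + 2 * eta (2 * r j)
     else if j \<in> {-K+1..K-1} then
       eta (r j) + eta (r j + r (j-1)) + eta (r j + r (j+1))
       + (2 * eta (2 * r K) - eta (r K + r (K-1)) - eta (r K + r (K+1)))
     else 0)"

end

theory Submission
  imports Defs "HOL-Homology.Homology"
begin

(* Injectivity near the uniform chain a0 is a discrete maximum principle. For chains x \<noteq> y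
   close to a0, take an index i where |x i - y i| is maximal. In the continuum region the
   i-th component is eta r + 2 eta (2 r), strictly increasing on (0, a1) because its
   derivative eta' r + 4 eta' (2 r) is positive there. In the atomistic region the mean value
   theorem along the segment from y to x turns (x i - y i) (psi_i x - psi_i y) into d_i (J d)_i
   for a row J of the Jacobian at an intermediate chain, d = x - y. Its diagonal entry is close
   to eta' a0 and its neighbour and interface entries are close to eta' (2 a0) < 0, with total
   weight at most 8 relative to d_i^2, so d_i (J d)_i is positive by the stability condition
   eta' a0 + 8 eta' (2 a0) > 0. Openness of the image is Brouwer's invariance of domain,
   transported to the (2N+1)-dimensional chain space. *)

section \<open>Invariance of domain on the chain space\<close>

lemma invariance_of_domain_homeomorphic_Euclidean_space:
  assumes "X homeomorphic_space Euclidean_space n"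
    and U: "openin X U"
    and f: "continuous_map (subtopology X U) X f"
    and inj: "inj_on f U"
  shows "openin X (f ` U)"
proof -
  obtain h g where hg: "homeomorphic_maps X (Euclidean_space n) h g"
    using assms(1) homeomorphic_space_def by blast
  then have h: "homeomorphic_map X (Euclidean_space n) h"
    using homeomorphic_maps_map by blast
  have g_h: "g (h x) = x" if "x \<in> topspace X" for x
    using hg that by (simp add: homeomorphic_maps_def)
  have U_sub: "U \<subseteq> topspace X"
    using U openin_subset by blast
  have fU_sub: "f ` U \<subseteq> topspace X"
    using f U_sub continuous_map_image_subset_topspace by fastforce
  have g: "continuous_map (subtopology (Euclidean_space n) (h ` U)) (subtopology X U) g"
  proof (rule continuous_map_into_subtopology)
    show "continuous_map (subtopology (Euclidean_space n) (h ` U)) X g"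
      using hg continuous_map_from_subtopology homeomorphic_maps_def by blast
    show "g \<in> topspace (subtopology (Euclidean_space n) (h ` U)) \<rightarrow> U"
      using g_h U_sub by auto
  qed
  have "openin (Euclidean_space n) ((h \<circ> f \<circ> g) ` h ` U)"
  proof (rule invariance_of_domain_Euclidean_space)
    show "openin (Euclidean_space n) (h ` U)"
      using homeomorphic_map_openness[OF h U_sub] U by simp
    show "continuous_map (subtopology (Euclidean_space n) (h ` U)) (Euclidean_space n) (h \<circ> f \<circ> g)"
      using g f h homeomorphic_imp_continuous_map by (blast intro: continuous_map_compose)
    show "inj_on (h \<circ> f \<circ> g) (h ` U)"
    proof (rule inj_onI)
      fix a b assume "a \<in> h ` U" "b \<in> h ` U" and eq: "(h \<circ> f \<circ> g) a = (h \<circ> f \<circ> g) b"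
      then obtain u v where uv: "u \<in> U" "v \<in> U" "a = h u" "b = h v"
        by blast
      moreover have "g (h u) = u" "g (h v) = v"
        using g_h U_sub uv by auto
      ultimately have "h (f u) = h (f v)"
        using eq by simp
      then have "f u = f v"
        using homeomorphic_imp_injective_map[OF h] fU_sub uv by (auto dest: inj_onD)
      then show "a = b"
        using inj uv by (auto dest: inj_onD)
    qed
  qed
  moreover have "(h \<circ> f \<circ> g) ` h ` U = h ` f ` U"
    using g_h U_sub by (force simp: image_iff)
  ultimately show ?thesis
    using homeomorphic_map_openness[OF h fU_sub] by simp
qed

lemma finite_support_homeomorphic_Euclidean_space:
  assumes "finite I"
  shows "top_of_set {r :: 'a \<Rightarrow> real. \<forall>j. j \<notin> I \<longrightarrow> r j = 0} homeomorphic_space Euclidean_space (card I)"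
proof -
  define n where "n = card I"
  obtain b where b: "bij_betw b {..<n} I"
    using assms ex_bij_betw_nat_finite lessThan_atLeast0 n_def by metis
  define c where "c = inv_into {..<n} b"
  have c: "bij_betw c I {..<n}" "\<And>k. k < n \<Longrightarrow> c (b k) = k" "\<And>j. j \<in> I \<Longrightarrow> b (c j) = j"
    using b bij_betw_inv_into bij_betw_inv_into_left bij_betw_inv_into_right c_def by fastforce+
  define h where "h r = (\<lambda>k. if k < n then r (b k) else 0)" for r :: "'a \<Rightarrow> real"
  define g where "g x = (\<lambda>j. if j \<in> I then x (c j) else 0)" for x :: "nat \<Rightarrow> real"
  let ?S = "{r :: 'a \<Rightarrow> real. \<forall>j. j \<notin> I \<longrightarrow> r j = 0}"
  have "homeomorphic_maps (top_of_set ?S) (Euclidean_space n) h g"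
    unfolding homeomorphic_maps_def
  proof (intro conjI ballI)
    show "continuous_map (top_of_set ?S) (Euclidean_space n) h"
      unfolding Euclidean_space_def h_def
      by (intro continuous_map_into_subtopology)
         (auto simp: continuous_map_componentwise_UNIV intro: continuous_on_subset[OF continuous_on_product_coordinates])
    show "continuous_map (Euclidean_space n) (top_of_set ?S) g"
      unfolding Euclidean_space_def g_def
      by (intro continuous_map_into_subtopology continuous_map_from_subtopology)
         (auto simp: continuous_map_componentwise_UNIV euclidean_product_topology[symmetric]
           intro: continuous_map_product_projection)
    show "g (h r) = r" if "r \<in> topspace (top_of_set ?S)" for r
      using that c b by (auto simp: g_def h_def fun_eq_iff bij_betw_def)
    show "h (g x) = x" if "x \<in> topspace (Euclidean_space n)" for x
      using that c b by (auto simp: g_def h_def fun_eq_iff bij_betw_def topspace_Euclidean_space)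
  qed
  then show ?thesis
    unfolding n_def homeomorphic_space_def by blast
qed

lemma invariance_of_domain_chain_space:
  assumes "openin (top_of_set (chain_space N)) U" "continuous_on U f"
    and "f ` U \<subseteq> chain_space N" "inj_on f U"
  shows "openin (top_of_set (chain_space N)) (f ` U)"
proof (rule invariance_of_domain_homeomorphic_Euclidean_space)
  show "top_of_set (chain_space N) homeomorphic_space Euclidean_space (card {-N..N})"
    unfolding chain_space_def by (rule finite_support_homeomorphic_Euclidean_space) simp
  have "U \<subseteq> chain_space N"
    by (rule openin_imp_subset[OF assms(1)])
  then show "continuous_map (subtopology (top_of_set (chain_space N)) U) (top_of_set (chain_space N)) f"
    using assms(2,3)
    by (simp add: subtopology_subtopology Int_absorb1 continuous_map_in_subtopology image_subset_iff_funcset)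
qed (use assms in auto)

lemma DERIV_chain_on_pos:
  assumes "\<And>r. r > 0 \<Longrightarrow> (eta has_real_derivative eta1 r) (at r)"
    and "(g has_real_derivative g') (at t within S)" "g t > 0" "D = eta1 (g t) * g'"
  shows "((\<lambda>x. eta (g x)) has_real_derivative D) (at t within S)"
  using DERIV_chain2 assms by blast

lemma isCont_common_radius:
  fixes f :: "real \<Rightarrow> real"
  assumes "isCont f a" "isCont f b" "\<epsilon> > 0" "c > 0"
  obtains \<delta> where "0 < \<delta>" "\<delta> \<le> c"
    "\<And>s. \<bar>s - a\<bar> < \<delta> \<Longrightarrow> \<bar>f s - f a\<bar> < \<epsilon>"
    "\<And>s. \<bar>s - b\<bar> < \<delta> \<Longrightarrow> \<bar>f s - f b\<bar> < \<epsilon>"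
proof -
  obtain \<delta>a \<delta>b where "\<delta>a > 0" "\<delta>b > 0"
    and "\<And>s. \<bar>s - a\<bar> < \<delta>a \<Longrightarrow> \<bar>f s - f a\<bar> < \<epsilon>"
      "\<And>s. \<bar>s - b\<bar> < \<delta>b \<Longrightarrow> \<bar>f s - f b\<bar> < \<epsilon>"
    using assms(1,2,3) unfolding continuous_at_real_range real_norm_def by metis
  then show ?thesis
    using \<open>c > 0\<close> by (intro that[of "min c (min \<delta>a \<delta>b)"]) auto
qed

lemma exists_dominant_coordinate:
  fixes x y :: "'a \<Rightarrow> real"
  assumes "finite I" "x \<noteq> y" "\<And>j. j \<notin> I \<Longrightarrow> x j = y j"
  obtains i where "i \<in> I" "x i \<noteq> y i" "\<And>j. j \<in> I \<Longrightarrow> \<bar>x j - y j\<bar> \<le> \<bar>x i - y i\<bar>"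
proof -
  obtain j0 where "x j0 \<noteq> y j0"
    using \<open>x \<noteq> y\<close> by blast
  then have "j0 \<in> I"
    using assms(3) by blast
  let ?D = "(\<lambda>j. \<bar>x j - y j\<bar>) ` I"
  obtain i where i: "i \<in> I" "\<bar>x i - y i\<bar> = Max ?D"
    using Max_in[of ?D] \<open>finite I\<close> \<open>j0 \<in> I\<close> by fastforce
  have "\<bar>x j - y j\<bar> \<le> \<bar>x i - y i\<bar>" if "j \<in> I" for j
    unfolding i(2) using \<open>finite I\<close> that by (intro Max_ge) auto
  moreover from this[OF \<open>j0 \<in> I\<close>] \<open>x j0 \<noteq> y j0\<close> have "x i \<noteq> y i"
    by auto
  ultimately show ?thesis
    using that i(1) by blast
qed

(* With exact coefficients the bracket multiplying beta is at most 8 d0^2 in absolute value;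
   the six coefficient errors enter with weights at most 1, 2, 2, 4, 2, 2 times d0^2. *)
lemma atomistic_row_dominance:
  fixes d0 dm dp dK dKm dKp c0 cm cp cK cKm cKp \<alpha> \<beta> \<epsilon> :: real
  assumes d: "\<bar>dm\<bar> \<le> \<bar>d0\<bar>" "\<bar>dp\<bar> \<le> \<bar>d0\<bar>"
      "\<bar>dK\<bar> \<le> \<bar>d0\<bar>" "\<bar>dKm\<bar> \<le> \<bar>d0\<bar>" "\<bar>dKp\<bar> \<le> \<bar>d0\<bar>"
    and c: "\<bar>c0 - \<alpha>\<bar> < \<epsilon>" "\<bar>cm - \<beta>\<bar> < \<epsilon>" "\<bar>cp - \<beta>\<bar> < \<epsilon>"
      "\<bar>cK - \<beta>\<bar> < \<epsilon>" "\<bar>cKm - \<beta>\<bar> < \<epsilon>" "\<bar>cKp - \<beta>\<bar> < \<epsilon>"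
    and neg: "\<beta> + \<epsilon> < 0"
  shows "(\<alpha> + 8 * \<beta> - 13 * \<epsilon>) * d0\<^sup>2
    \<le> d0 * (c0 * d0 + cm * (d0 + dm) + cp * (d0 + dp) + 4 * cK * dK - cKm * (dK + dKm) - cKp * (dK + dKp))"
proof -
  define M where "M = d0\<^sup>2"
  have prod: "\<bar>d0 * u\<bar> \<le> M" if "\<bar>u\<bar> \<le> \<bar>d0\<bar>" for u
  proof -
    have "\<bar>d0 * u\<bar> \<le> \<bar>d0\<bar> * \<bar>d0\<bar>"
      unfolding abs_mult using that by (rule mult_left_mono) simp
    then show ?thesis
      by (simp add: M_def power2_eq_square)
  qed
  have diag: "(\<alpha> - \<epsilon>) * M \<le> c0 * (d0 * d0)"
    unfolding M_def power2_eq_square using c(1) by (intro mult_right_mono) auto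
  have neighbour: "(\<beta> - \<epsilon>) * (2 * M) \<le> e * (d0 * (d0 + u))"
    if "\<bar>u\<bar> \<le> \<bar>d0\<bar>" "\<bar>e - \<beta>\<bar> < \<epsilon>" for e u
  proof -
    have P: "0 \<le> d0 * (d0 + u)" "d0 * (d0 + u) \<le> 2 * M"
      using prod[OF that(1)] by (auto simp: M_def power2_eq_square algebra_simps abs_le_iff)
    have "(\<beta> - \<epsilon>) * (2 * M) \<le> (\<beta> - \<epsilon>) * (d0 * (d0 + u))"
      using P(2) neg that(2) by (intro mult_left_mono_neg) auto
    also have "\<dots> \<le> e * (d0 * (d0 + u))"
      using P(1) that(2) by (intro mult_right_mono) auto
    finally show ?thesis .
  qed
  have interface: "e * (d0 * u) \<le> (\<epsilon> - \<beta>) * M"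
    if "\<bar>u\<bar> \<le> \<bar>d0\<bar>" "\<bar>e - \<beta>\<bar> < \<epsilon>" for e u
  proof -
    have "\<bar>e * (d0 * u)\<bar> \<le> (\<epsilon> - \<beta>) * M"
      unfolding abs_mult using that neg prod[OF that(1)] by (intro mult_mono) auto
    then show ?thesis
      by linarith
  qed
  have "\<bar>(4 * cK - cKm - cKp) * (d0 * dK)\<bar> \<le> (6 * \<epsilon> - 2 * \<beta>) * M"
    unfolding abs_mult using c neg prod[OF d(3)]
    by (intro mult_mono) (auto simp: abs_le_iff abs_less_iff)
  then have centre: "-((6 * \<epsilon> - 2 * \<beta>) * M) \<le> (4 * cK - cKm - cKp) * (d0 * dK)"
    by linarith
  have "(\<alpha> + 8 * \<beta> - 13 * \<epsilon>) * M
    = (\<alpha> - \<epsilon>) * M + (\<beta> - \<epsilon>) * (2 * M) + (\<beta> - \<epsilon>) * (2 * M)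
      - (6 * \<epsilon> - 2 * \<beta>) * M - (\<epsilon> - \<beta>) * M - (\<epsilon> - \<beta>) * M"
    by (simp add: algebra_simps)
  also have "\<dots> \<le> c0 * (d0 * d0) + cm * (d0 * (d0 + dm)) + cp * (d0 * (d0 + dp))
      + (4 * cK - cKm - cKp) * (d0 * dK) - cKm * (d0 * dKm) - cKp * (d0 * dKp)"
    using diag neighbour[OF d(1) c(2)] neighbour[OF d(2) c(3)] centre
      interface[OF d(4) c(5)] interface[OF d(5) c(6)]
    by linarith
  also have "\<dots> = d0 * (c0 * d0 + cm * (d0 + dm) + cp * (d0 + dp) + 4 * cK * dK
      - cKm * (dK + dKm) - cKp * (dK + dKp))"
    by (simp add: algebra_simps)
  finally show ?thesis
    unfolding M_def .
qed

section \<open>The components of the force map\<close>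

definition atomistic_force :: "(real \<Rightarrow> real) \<Rightarrow> int \<Rightarrow> int \<Rightarrow> (int \<Rightarrow> real) \<Rightarrow> real" where
  "atomistic_force eta K j r = eta (r j) + eta (r j + r (j-1)) + eta (r j + r (j+1))
     + (2 * eta (2 * r K) - eta (r K + r (K-1)) - eta (r K + r (K+1)))"

lemma PsiF_continuum:
  assumes "j \<in> {-N..-K} \<union> {K..N}"
  shows "PsiF eta N K r j = eta (r j) + 2 * eta (2 * r j)"
  by (simp only: PsiF_def assms if_True)

lemma PsiF_atomistic:
  "j \<in> {-K+1..K-1} \<Longrightarrow> PsiF eta N K r j = atomistic_force eta K j r"
  by (auto simp: PsiF_def atomistic_force_def)

lemma PsiF_in_chain_space:
  assumes "0 \<le> K" "K \<le> N"
  shows "PsiF eta N K r \<in> chain_space N"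
  using assms by (auto simp: PsiF_def chain_space_def)

lemma continuous_on_PsiF:
  assumes eta: "continuous_on {0<..} eta" and U: "U \<subseteq> pos_chain N" and K: "0 < K" "K < N"
  shows "continuous_on U (PsiF eta N K)"
proof (rule continuous_on_coordinatewise_then_product)
  have pos: "r j > 0" if "r \<in> U" "j \<in> {-N..N}" for r j
    using U that by (auto simp: pos_chain_def)
  have coord: "continuous_on S (\<lambda>r. r j)" for S and j :: int
    by (rule continuous_on_subset[OF continuous_on_product_coordinates]) simp
  have eta_comp: "continuous_on U (\<lambda>r. eta (p r))"
    if "continuous_on U p" "\<And>r. r \<in> U \<Longrightarrow> p r > 0" for p
    using that by (intro continuous_on_compose2[OF eta]) auto
  fix j
  consider (continuum) "j \<in> {-N..-K} \<union> {K..N}" | (atomistic) "j \<in> {-K+1..K-1}"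
    | (outside) "j \<notin> {-N..N}"
    using K by force
  then show "continuous_on U (\<lambda>r. PsiF eta N K r j)"
  proof cases
    case continuum
    then have "j \<in> {-N..N}"
      using K by auto
    with continuum show ?thesis
      by (simp add: PsiF_continuum) (intro continuous_intros eta_comp coord; simp add: pos)
  next
    case atomistic
    then have "\<forall>r\<in>U. r j > 0 \<and> r (j-1) > 0 \<and> r (j+1) > 0 \<and> r K > 0 \<and> r (K-1) > 0 \<and> r (K+1) > 0"
      using K pos by auto
    then show ?thesis
      unfolding PsiF_atomistic[OF atomistic] atomistic_force_def
      by (intro continuous_intros eta_comp coord) auto
  next
    case outside
    then have "PsiF eta N K r j = 0" for r
      using PsiF_in_chain_space[of K N eta r] K by (simp add: chain_space_def)
    then show ?thesis
      by simp
  qed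
qed

lemma strict_mono_on_continuum_force:
  assumes eta_d: "\<And>r. r > 0 \<Longrightarrow> (eta has_real_derivative eta1 r) (at r)"
    and pos: "\<And>r. 0 < r \<Longrightarrow> r < b \<Longrightarrow> eta1 r + 4 * eta1 (2 * r) > 0"
  shows "strict_mono_on {0<..<b} (\<lambda>r. eta r + 2 * eta (2 * r))"
proof (rule strict_mono_onI)
  fix p q :: real assume pq: "p \<in> {0<..<b}" "q \<in> {0<..<b}" "p < q"
  show "eta p + 2 * eta (2 * p) < eta q + 2 * eta (2 * q)"
  proof (rule DERIV_pos_imp_increasing[OF \<open>p < q\<close>])
    fix t assume "p \<le> t" "t \<le> q"
    with pq have t: "0 < t" "t < b"
      by auto
    have "((\<lambda>r. eta r + 2 * eta (2 * r)) has_real_derivative eta1 t + 4 * eta1 (2 * t)) (at t)"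
      using t by (intro derivative_eq_intros DERIV_chain_on_pos[OF eta_d] eta_d) auto
    then show "\<exists>y. ((\<lambda>r. eta r + 2 * eta (2 * r)) has_real_derivative y) (at t) \<and> y > 0"
      using pos t by blast
  qed
qed

definition atomistic_force_deriv ::
    "(real \<Rightarrow> real) \<Rightarrow> int \<Rightarrow> int \<Rightarrow> (int \<Rightarrow> real) \<Rightarrow> (int \<Rightarrow> real) \<Rightarrow> real" where
  "atomistic_force_deriv eta1 K j r d = eta1 (r j) * d j
     + eta1 (r j + r (j-1)) * (d j + d (j-1)) + eta1 (r j + r (j+1)) * (d j + d (j+1))
     + 4 * eta1 (2 * r K) * d K
     - eta1 (r K + r (K-1)) * (d K + d (K-1)) - eta1 (r K + r (K+1)) * (d K + d (K+1))"

lemma has_real_derivative_atomistic_force_line: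
  assumes eta_d: "\<And>r. r > 0 \<Longrightarrow> (eta has_real_derivative eta1 r) (at r)"
    and pos: "\<And>j. j \<in> {i-1, i, i+1, K-1, K, K+1} \<Longrightarrow> y j + t * d j > 0"
  shows "((\<lambda>t. atomistic_force eta K i (\<lambda>j. y j + t * d j)) has_real_derivative
    atomistic_force_deriv eta1 K i (\<lambda>j. y j + t * d j) d) (at t)"
proof -
  define z where "z t j = y j + t * d j" for t j
  have dz: "((\<lambda>t. z t j) has_real_derivative d j) (at t)" for j
    unfolding z_def by (auto intro!: derivative_eq_intros)
  have "z t i > 0" "z t (i-1) > 0" "z t (i+1) > 0" "z t K > 0" "z t (K-1) > 0" "z t (K+1) > 0"
    using pos by (simp_all add: z_def)
  then have "((\<lambda>t. atomistic_force eta K i (z t)) has_real_derivative atomistic_force_deriv eta1 K i (z t) d) (at t)"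
    unfolding atomistic_force_def
    by (auto intro!: derivative_eq_intros DERIV_chain_on_pos[OF eta_d] dz
        simp: atomistic_force_deriv_def algebra_simps)
  then show ?thesis
    by (simp add: z_def [abs_def])
qed

lemma atomistic_force_deriv_dominance:
  assumes near_a: "\<And>s. \<bar>s - a\<bar> < \<delta> \<Longrightarrow> \<bar>eta1 s - \<alpha>\<bar> < \<epsilon>"
    and near_2a: "\<And>s. \<bar>s - 2 * a\<bar> < 2 * \<delta> \<Longrightarrow> \<bar>eta1 s - \<beta>\<bar> < \<epsilon>"
    and "\<beta> + \<epsilon> < 0"
    and near: "\<And>j. j \<in> {i-1, i, i+1, K-1, K, K+1} \<Longrightarrow> \<bar>r j - a\<bar> < \<delta>"
    and dominant: "\<And>j. j \<in> {i-1, i+1, K-1, K, K+1} \<Longrightarrow> \<bar>d j\<bar> \<le> \<bar>d i\<bar>"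
  shows "(\<alpha> + 8 * \<beta> - 13 * \<epsilon>) * (d i)\<^sup>2 \<le> d i * atomistic_force_deriv eta1 K i r d"
proof -
  let ?J = "{i-1, i, i+1, K-1, K, K+1}"
  have J: "i-1 \<in> ?J" "i \<in> ?J" "i+1 \<in> ?J" "K-1 \<in> ?J" "K \<in> ?J" "K+1 \<in> ?J"
    by simp_all
  have near_\<beta>: "\<bar>eta1 (r j + r k) - \<beta>\<bar> < \<epsilon>" if "j \<in> ?J" "k \<in> ?J" for j k
    using near[OF that(1)] near[OF that(2)] by (intro near_2a) (simp add: abs_less_iff)
  have "\<bar>eta1 (r i) - \<alpha>\<bar> < \<epsilon>"
    "\<bar>eta1 (r i + r (i-1)) - \<beta>\<bar> < \<epsilon>" "\<bar>eta1 (r i + r (i+1)) - \<beta>\<bar> < \<epsilon>"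
    "\<bar>eta1 (2 * r K) - \<beta>\<bar> < \<epsilon>"
    "\<bar>eta1 (r K + r (K-1)) - \<beta>\<bar> < \<epsilon>" "\<bar>eta1 (r K + r (K+1)) - \<beta>\<bar> < \<epsilon>"
    using near_a[OF near[OF J(2)]] near_\<beta>[OF J(2) J(1)] near_\<beta>[OF J(2) J(3)] near_\<beta>[OF J(5) J(5)]
      near_\<beta>[OF J(5) J(4)] near_\<beta>[OF J(5) J(6)]
    by (simp_all only: mult_2)
  moreover have "\<bar>d (i-1)\<bar> \<le> \<bar>d i\<bar>" "\<bar>d (i+1)\<bar> \<le> \<bar>d i\<bar>" "\<bar>d K\<bar> \<le> \<bar>d i\<bar>"
    "\<bar>d (K-1)\<bar> \<le> \<bar>d i\<bar>" "\<bar>d (K+1)\<bar> \<le> \<bar>d i\<bar>"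
    by (simp_all add: dominant)
  ultimately show ?thesis
    unfolding atomistic_force_deriv_def
    by (intro atomistic_row_dominance[where \<alpha> = \<alpha> and \<beta> = \<beta> and \<epsilon> = \<epsilon>] \<open>\<beta> + \<epsilon> < 0\<close>)
qed

lemma atomistic_force_difference_sign:
  fixes x y :: "int \<Rightarrow> real"
  assumes eta_d: "\<And>r. r > 0 \<Longrightarrow> (eta has_real_derivative eta1 r) (at r)"
    and near_a: "\<And>s. \<bar>s - a\<bar> < \<delta> \<Longrightarrow> \<bar>eta1 s - \<alpha>\<bar> < \<epsilon>"
    and near_2a: "\<And>s. \<bar>s - 2 * a\<bar> < 2 * \<delta> \<Longrightarrow> \<bar>eta1 s - \<beta>\<bar> < \<epsilon>"
    and "\<delta> \<le> a" "\<beta> + \<epsilon> < 0" "13 * \<epsilon> < \<alpha> + 8 * \<beta>"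
    and near: "\<And>j. j \<in> {i-1, i, i+1, K-1, K, K+1} \<Longrightarrow> \<bar>x j - a\<bar> < \<delta> \<and> \<bar>y j - a\<bar> < \<delta>"
    and dominant: "\<And>j. j \<in> {i-1, i+1, K-1, K, K+1} \<Longrightarrow> \<bar>x j - y j\<bar> \<le> \<bar>x i - y i\<bar>"
    and "x i \<noteq> y i"
  shows "(x i - y i) * (atomistic_force eta K i x - atomistic_force eta K i y) > 0"
proof -
  define d where "d j = x j - y j" for j
  define z where "z t = (\<lambda>j. y j + t * d j)" for t
  have z_near: "\<bar>z t j - a\<bar> < \<delta>" if "0 \<le> t" "t \<le> 1" "j \<in> {i-1, i, i+1, K-1, K, K+1}" for t j
  proof -
    have "(1 - t) *\<^sub>R y j + t *\<^sub>R x j \<in> ball a \<delta>"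
      using near[OF that(3)] that(1,2)
      by (intro convexD[OF convex_ball]) (auto simp: dist_real_def abs_minus_commute)
    then show ?thesis
      by (simp add: z_def d_def dist_real_def abs_minus_commute algebra_simps)
  qed
  have "((\<lambda>t. atomistic_force eta K i (z t)) has_real_derivative atomistic_force_deriv eta1 K i (z t) d) (at t)"
    if t: "0 \<le> t" "t \<le> 1" for t
  proof -
    have pos: "y j + t * d j > 0" if "j \<in> {i-1, i, i+1, K-1, K, K+1}" for j
      using z_near[OF t that] \<open>\<delta> \<le> a\<close> by (simp add: z_def abs_less_iff)
    show ?thesis
      unfolding z_def using eta_d pos by (rule has_real_derivative_atomistic_force_line)
  qed
  then obtain \<xi> where \<xi>: "0 < \<xi>" "\<xi> < 1" and mvt: "atomistic_force eta K i (z 1)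
      - atomistic_force eta K i (z 0) = (1 - 0) * atomistic_force_deriv eta1 K i (z \<xi>) d"
    using MVT2[OF zero_less_one, where f = "\<lambda>t. atomistic_force eta K i (z t)"
        and f' = "\<lambda>t. atomistic_force_deriv eta1 K i (z t) d"] by blast
  have "z 1 = x" "z 0 = y"
    by (auto simp: z_def d_def)
  with mvt have "atomistic_force eta K i x - atomistic_force eta K i y = atomistic_force_deriv eta1 K i (z \<xi>) d"
    by simp
  moreover have "(\<alpha> + 8 * \<beta> - 13 * \<epsilon>) * (d i)\<^sup>2 \<le> d i * atomistic_force_deriv eta1 K i (z \<xi>) d"
  proof (rule atomistic_force_deriv_dominance)
    show "\<bar>z \<xi> j - a\<bar> < \<delta>" if "j \<in> {i-1, i, i+1, K-1, K, K+1}" for j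
      using \<xi> by (intro z_near[OF _ _ that]) simp_all
    show "\<bar>d j\<bar> \<le> \<bar>d i\<bar>" if "j \<in> {i-1, i+1, K-1, K, K+1}" for j
      unfolding d_def by (rule dominant[OF that])
  qed (fact near_a near_2a \<open>\<beta> + \<epsilon> < 0\<close>)+
  moreover have "(\<alpha> + 8 * \<beta> - 13 * \<epsilon>) * (d i)\<^sup>2 > 0"
    using assms(6) \<open>x i \<noteq> y i\<close> by (simp add: d_def)
  ultimately show ?thesis
    by (simp add: d_def)
qed

section \<open>Injectivity near the uniform chain\<close>

definition chain_box :: "int \<Rightarrow> real \<Rightarrow> real \<Rightarrow> (int \<Rightarrow> real) set" where
  "chain_box N a \<delta> = {r \<in> chain_space N. \<forall>j\<in>{-N..N}. \<bar>r j - a\<bar> < \<delta>}"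

lemma openin_chain_box: "openin (top_of_set (chain_space N)) (chain_box N a \<delta>)"
proof -
  have "open (\<Inter>j\<in>{-N..N}. (\<lambda>r. r j) -` ball a \<delta>)"
    by (intro open_INT ballI open_vimage continuous_on_product_coordinates) auto
  moreover have "chain_box N a \<delta> = chain_space N \<inter> (\<Inter>j\<in>{-N..N}. (\<lambda>r. r j) -` ball a \<delta>)"
    by (auto simp: chain_box_def dist_real_def abs_minus_commute)
  ultimately show ?thesis
    by auto
qed

lemma constant_chain_in_chain_box:
  "\<delta> > 0 \<Longrightarrow> (\<lambda>j. if j \<in> {-N..N} then a else 0) \<in> chain_box N a \<delta>"
  by (simp add: chain_box_def chain_space_def)

lemma chain_box_subset_pos_chain: "\<delta> \<le> a \<Longrightarrow> chain_box N a \<delta> \<subseteq> pos_chain N"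
  by (auto simp: chain_box_def pos_chain_def abs_less_iff)

lemma inj_on_PsiF_chain_box:
  assumes eta_d: "\<And>r. r > 0 \<Longrightarrow> (eta has_real_derivative eta1 r) (at r)"
    and continuum_stable: "\<And>r. 0 < r \<Longrightarrow> r < b \<Longrightarrow> eta1 r + 4 * eta1 (2 * r) > 0" "a + \<delta> \<le> b"
    and near_a: "\<And>s. \<bar>s - a\<bar> < \<delta> \<Longrightarrow> \<bar>eta1 s - \<alpha>\<bar> < \<epsilon>"
    and near_2a: "\<And>s. \<bar>s - 2 * a\<bar> < 2 * \<delta> \<Longrightarrow> \<bar>eta1 s - \<beta>\<bar> < \<epsilon>"
    and coeffs: "\<delta> \<le> a" "\<beta> + \<epsilon> < 0" "13 * \<epsilon> < \<alpha> + 8 * \<beta>"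
    and K: "0 < K" "K < N"
  shows "inj_on (PsiF eta N K) (chain_box N a \<delta>)"
proof (rule inj_onI, rule ccontr)
  fix x y assume x: "x \<in> chain_box N a \<delta>" and y: "y \<in> chain_box N a \<delta>"
    and eq: "PsiF eta N K x = PsiF eta N K y" and "x \<noteq> y"
  have "x j = y j" if "j \<notin> {-N..N}" for j
    using x y that by (simp add: chain_box_def chain_space_def)
  then obtain i where i: "i \<in> {-N..N}" "x i \<noteq> y i"
    and dominant: "\<And>j. j \<in> {-N..N} \<Longrightarrow> \<bar>x j - y j\<bar> \<le> \<bar>x i - y i\<bar>"
    using exists_dominant_coordinate[of "{-N..N}" x y] \<open>x \<noteq> y\<close> by blast
  have near: "\<bar>x j - a\<bar> < \<delta> \<and> \<bar>y j - a\<bar> < \<delta>" if "j \<in> {-N..N}" for j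
    using x y that by (simp add: chain_box_def)
  consider (continuum) "i \<in> {-N..-K} \<union> {K..N}" | (atomistic) "i \<in> {-K+1..K-1}"
    using i(1) by force
  then show False
  proof cases
    case continuum
    have "inj_on (\<lambda>r. eta r + 2 * eta (2 * r)) {0<..<b}"
      by (rule strict_mono_on_imp_inj_on[OF strict_mono_on_continuum_force[of eta eta1 b]])
        (use eta_d continuum_stable(1) in auto)
    moreover have "eta (x i) + 2 * eta (2 * x i) = eta (y i) + 2 * eta (2 * y i)"
      using fun_cong[OF eq, of i] by (simp add: PsiF_continuum[OF continuum])
    moreover have "x i \<in> {0<..<b}" "y i \<in> {0<..<b}"
      using near[OF i(1)] coeffs(1) continuum_stable(2) by (auto simp: abs_less_iff)
    ultimately show False
      using i(2) by (auto dest: inj_onD)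
  next
    case atomistic
    then have "{i-1, i, i+1, K-1, K, K+1} \<subseteq> {-N..N}"
      using K by auto
    then have "(x i - y i) * (atomistic_force eta K i x - atomistic_force eta K i y) > 0"
      using near dominant i(2)
      by (intro atomistic_force_difference_sign[OF eta_d near_a near_2a coeffs]) auto
    moreover have "atomistic_force eta K i x = atomistic_force eta K i y"
      using fun_cong[OF eq, of i] by (simp add: PsiF_atomistic[OF atomistic])
    ultimately show False
      by simp
  qed
qed

theorem lemma4p1:
  fixes phi eta eta1 eta2 :: "real \<Rightarrow> real"
    and a0 r1 r2 a1 :: real
    and N K :: int
  assumes phi_d: "\<And>r. r > 0 \<Longrightarrow> (phi has_real_derivative eta r) (at r)"
    and eta_d: "\<And>r. r > 0 \<Longrightarrow> (eta has_real_derivative eta1 r) (at r)"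
    and eta1_d: "\<And>r. r > 0 \<Longrightarrow> (eta1 has_real_derivative eta2 r) (at r)"
    and eta2_cont: "continuous_on {0<..} eta2"
    and cs: "0 < a0" "a0 < r1" "r1 < r2" "r2 < 2 * a0" "a1 > a0"
    and h1a: "\<And>r. 0 < r \<Longrightarrow> r < r1 \<Longrightarrow> eta1 r > 0"
    and h1b: "\<And>r. r > r1 \<Longrightarrow> eta1 r < 0"
    and h2a: "\<And>r. 0 < r \<Longrightarrow> r < r2 \<Longrightarrow> eta2 r < 0"
    and h2b: "\<And>r. r > r2 \<Longrightarrow> eta2 r > 0"
    and h3a: "\<And>r. 0 < r \<Longrightarrow> r < a0 \<Longrightarrow> eta r + 2 * eta (2 * r) < 0"
    and h3b: "\<And>r. r > a0 \<Longrightarrow> eta r + 2 * eta (2 * r) > 0"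
    and h4a: "\<And>r. 0 < r \<Longrightarrow> r < a1 \<Longrightarrow> eta1 r + 4 * eta1 (2 * r) > 0"
    and h4b: "\<And>r. r > a1 \<Longrightarrow> eta1 r + 4 * eta1 (2 * r) < 0"
    and NK: "0 < K" "K < N - 1"
    and stab: "eta1 a0 + 8 * eta1 (2 * a0) > 0"
  shows "\<exists>U. (\<lambda>j. if j \<in> {-N..N} then a0 else 0) \<in> U
            \<and> U \<subseteq> pos_chain N
            \<and> openin (top_of_set (chain_space N)) U
            \<and> inj_on (PsiF eta N K) U
            \<and> openin (top_of_set (chain_space N)) (PsiF eta N K ` U)"
proof -
  let ?\<alpha> = "eta1 a0" and ?\<beta> = "eta1 (2 * a0)"
  have "?\<beta> < 0" "?\<alpha> + 8 * ?\<beta> > 0"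
    using h1b cs stab by simp_all
  then obtain \<epsilon> where \<epsilon>: "\<epsilon> > 0" "?\<beta> + \<epsilon> < 0" "13 * \<epsilon> < ?\<alpha> + 8 * ?\<beta>"
    by (intro that[of "min ((?\<alpha> + 8 * ?\<beta>) / 14) (- ?\<beta> / 2)"]) (auto simp: min_def field_simps)
  have "isCont eta1 a0" "isCont eta1 (2 * a0)"
    using DERIV_isCont[OF eta1_d] cs(1) by simp_all
  then obtain \<delta> where \<delta>: "0 < \<delta>" "\<delta> \<le> min a0 (a1 - a0)"
    and near_a0: "\<And>s. \<bar>s - a0\<bar> < \<delta> \<Longrightarrow> \<bar>eta1 s - ?\<alpha>\<bar> < \<epsilon>"
    and near_2a0: "\<And>s. \<bar>s - 2 * a0\<bar> < \<delta> \<Longrightarrow> \<bar>eta1 s - ?\<beta>\<bar> < \<epsilon>"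
    by (rule isCont_common_radius[where c = "min a0 (a1 - a0)", OF _ _ \<epsilon>(1)]) (use cs in auto)
  let ?U = "chain_box N a0 (\<delta> / 2)"
  have inj: "inj_on (PsiF eta N K) ?U"
    by (rule inj_on_PsiF_chain_box[where \<alpha> = ?\<alpha> and \<beta> = ?\<beta> and \<epsilon> = \<epsilon>, OF eta_d h4a])
      (use \<delta> near_a0 near_2a0 \<epsilon> NK in auto)
  have "continuous_on {0<..} eta"
    using eta_d by (intro continuous_at_imp_continuous_on ballI DERIV_isCont) auto
  then have "continuous_on ?U (PsiF eta N K)"
    using chain_box_subset_pos_chain[of "\<delta> / 2" a0] \<delta> NK by (intro continuous_on_PsiF) auto
  moreover have "PsiF eta N K ` ?U \<subseteq> chain_space N"
    using PsiF_in_chain_space NK by auto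
  ultimately have "openin (top_of_set (chain_space N)) (PsiF eta N K ` ?U)"
    by (rule invariance_of_domain_chain_space[OF openin_chain_box _ _ inj])
  then show ?thesis
    using constant_chain_in_chain_box[of "\<delta> / 2"] chain_box_subset_pos_chain[of "\<delta> / 2" a0] \<delta>
      openin_chain_box inj by (intro exI[of _ ?U]) simp
qed

end
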